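(* Let $\rho>0$ and $n\in\mathbb N$, and put $b_n=(2^n-1)\rho^{-n}$ if $\rho\le1$ and $b_n=2^n-1$ if $\rho\ge1$. Then for every $\varepsilon=(\varepsilon_1,\dots,\varepsilon_n)\in\mathbb C^n$ there exist $s\in\mathbb N$, $\mu_1,\dots,\mu_s\in\mathbb C$ with $|\mu_j|=\rho$, and $\alpha_1,\dots,\alpha_s\ge0$ such that $$\sum_{j=1}^s\alpha_j\le b_n\|\varepsilon\|\qquad\text{and}\qquad\sum_{j=1}^s\alpha_j\mu_j^k=\varepsilon_k\quad(1\le k\le n).$$
   Context: $\|\varepsilon\|=\max_{1\le k\le n}|\varepsilon_k|$. *)

theory Defs
  imports "HOL-Analysis.Analysis"
begin

text \<open>Sup norm of a vector eps in C^n, stored as a function indexed by 1..n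
  (value 0 for n = 0).\<close>
definition supnorm :: "nat \<Rightarrow> (nat \<Rightarrow> complex) \<Rightarrow> real" where
  "supnorm n eps = (if n = 0 then 0 else Max ((\<lambda>k. cmod (eps k)) ` {1..n}))"

definition bconst :: "real \<Rightarrow> nat \<Rightarrow> real" where
  "bconst rho n = (if rho \<le> 1 then (2 ^ n - 1) * rho powi (- int n) else 2 ^ n - 1)"

end

theory Submission imports Defs begin

text \<open>If the moments of index below j vanish, the moment j is matched exactly by the measure of
  mass |c| spread evenly over the rotated j-th roots of unity whose j-th power is c: it has
  no moments of index 1, ..., j - 1, and all its moments are bounded by |c|. Subtracting it
  at most doubles the sup norm of the remaining moments, so clearing the moments from the
  lowest index upwards costs 1 + 2 + ... + 2^(n-1) = 2^n - 1 times the norm. Radius rho is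
  reduced to the unit circle by dividing the k-th moment by rho^k, which costs rho^(-n) when
  rho \<le> 1 and nothing when rho \<ge> 1.\<close>

definition moment :: "nat \<Rightarrow> (complex \<times> real) list \<Rightarrow> complex" where
  "moment k L = (\<Sum>(z, a)\<leftarrow>L. complex_of_real a * z ^ k)"

definition mass :: "(complex \<times> real) list \<Rightarrow> real" where
  "mass L = sum_list (map snd L)"

definition unit_measure :: "(complex \<times> real) list \<Rightarrow> bool" where
  "unit_measure L \<longleftrightarrow> (\<forall>(z, a)\<in>set L. cmod z = 1 \<and> a \<ge> 0)"

lemma moment_append [simp]: "moment k (L1 @ L2) = moment k L1 + moment k L2"
  by (simp add: moment_def)

lemma mass_append [simp]: "mass (L1 @ L2) = mass L1 + mass L2"
  by (simp add: mass_def)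

lemma unit_measure_append [simp]: "unit_measure (L1 @ L2) \<longleftrightarrow> unit_measure L1 \<and> unit_measure L2"
  by (auto simp: unit_measure_def)

lemma cis_2pi_div_pow_self:
  fixes j :: nat
  assumes "j \<ge> 1"
  shows "cis (2 * pi / j) ^ j = 1"
proof -
  have "cis (2 * pi / j) ^ j = cis (real j * (2 * pi / j))"
    by (rule Complex.DeMoivre)
  also have "\<dots> = 1"
    using assms by simp
  finally show ?thesis .
qed

lemma cis_2pi_div_pow_ne_1:
  fixes m j :: nat
  assumes "0 < m" "m < j"
  shows "cis (2 * pi / j) ^ m \<noteq> 1"
proof
  assume "cis (2 * pi / j) ^ m = 1"
  then have "cos (real m * (2 * pi / j)) = 1"
    using cos_n_Re_cis_pow_n[of m "2 * pi / j"] by simp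
  then obtain x :: int where "real m * (2 * pi / j) = real_of_int x * 2 * pi"
    using cos_one_2pi_int by blast
  then have "real m = real_of_int x * real j"
    using assms by (simp add: field_simps)
  then have "int m = x * int j"
    by (metis of_int_eq_iff of_int_mult of_int_of_nat_eq)
  moreover have "x \<le> 0 \<or> x \<ge> 1" by arith
  moreover have "x \<ge> 1 \<Longrightarrow> x * int j \<ge> int j"
    using mult_right_mono[of 1 x "int j"] by simp
  ultimately show False
    using assms mult_nonpos_nonneg[of x "int j"] by linarith
qed

lemma sum_powers_root_of_unity:
  fixes m j :: nat
  assumes "1 \<le> m" "m < j"
  shows "(\<Sum>i<j. (cis (2 * pi / j) ^ m) ^ i) = 0"
proof -
  have "(cis (2 * pi / j) ^ m) ^ j = (cis (2 * pi / j) ^ j) ^ m"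
    by (simp flip: power_mult add: mult.commute)
  also have "\<dots> = 1"
    using cis_2pi_div_pow_self[of j] assms by simp
  finally have "(cis (2 * pi / j) ^ m) ^ j = 1" .
  then show ?thesis
    using cis_2pi_div_pow_ne_1[of m j] assms by (simp add: geometric_sum)
qed

lemma unit_measure_single_moment:
  fixes j :: nat
  assumes "j \<ge> 1"
  obtains L where "unit_measure L" "mass L = cmod c"
    "\<forall>m\<in>{1..<j}. moment m L = 0" "moment j L = c" "\<forall>m. cmod (moment m L) \<le> cmod c"
proof -
  define w where "w = cis (2 * pi / j)"
  define z where "z = cis (Arg c / j)"
  define a where "a = cmod c / j"
  define L where "L = map (\<lambda>i. (z * w ^ i, a)) [0..<j]"
  have a_nonneg: "a \<ge> 0"
    by (simp add: a_def)
  have moment_L: "moment m L = of_real a * z ^ m * (\<Sum>i<j. (w ^ m) ^ i)" for m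
  proof -
    have "moment m L = (\<Sum>i<j. of_real a * (z * w ^ i) ^ m)"
      by (simp add: moment_def L_def o_def interv_sum_list_conv_sum_set_nat atLeast0LessThan)
    also have "\<dots> = (\<Sum>i<j. of_real a * z ^ m * (w ^ m) ^ i)"
      by (simp add: power_mult_distrib mult_ac flip: power_mult)
    finally show ?thesis by (simp add: sum_distrib_left)
  qed
  have "unit_measure L"
    by (auto simp: unit_measure_def L_def a_def z_def w_def norm_mult norm_power)
  moreover have "mass L = cmod c"
    using assms by (simp add: mass_def L_def a_def o_def interv_sum_list_conv_sum_set_nat)
  moreover have "\<forall>m\<in>{1..<j}. moment m L = 0"
    using sum_powers_root_of_unity by (simp add: moment_L w_def)
  moreover have "moment j L = c"
  proof -
    have "moment j L = of_real a * z ^ j * of_nat j"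
      using cis_2pi_div_pow_self[OF assms] by (simp add: moment_L w_def)
    also have "\<dots> = of_real (cmod c) * cis (Arg c)"
    proof -
      have "z ^ j = cis (real j * (Arg c / j))"
        unfolding z_def by (rule Complex.DeMoivre)
      then have "z ^ j = cis (Arg c)"
        using assms by simp
      then show ?thesis
        using assms by (simp add: a_def)
    qed
    also have "\<dots> = c"
      by (metis rcis_cmod_Arg rcis_def)
    finally show ?thesis .
  qed
  moreover have "cmod (moment m L) \<le> cmod c" for m
  proof -
    have "cmod (\<Sum>i<j. (w ^ m) ^ i) \<le> (\<Sum>i<j. cmod ((w ^ m) ^ i))"
      by (rule norm_sum)
    also have "\<dots> = j"
      by (simp add: w_def norm_power)
    finally have "cmod (moment m L) \<le> a * j"
      using a_nonneg by (simp add: moment_L norm_mult z_def norm_power mult_left_mono)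
    then show ?thesis
      using assms by (simp add: a_def)
  qed
  ultimately show ?thesis using that by blast
qed

lemma unit_measure_clearing_moments:
  assumes "d \<le> n" "\<forall>k\<in>{1..n}. cmod (e k) \<le> E" "\<forall>k\<in>{1..n - d}. e k = 0"
  shows "\<exists>L. unit_measure L \<and> mass L \<le> (2 ^ d - 1) * E \<and> (\<forall>k\<in>{1..n}. moment k L = e k)"
  using assms
proof (induction d arbitrary: e E)
  case 0
  then show ?case
    by (intro exI[of _ "[]"]) (auto simp: unit_measure_def mass_def moment_def)
next
  case (Suc d)
  define j where "j = n - d"
  have j: "1 \<le> j" "j \<le> n"
    using Suc.prems(1) by (auto simp: j_def)
  have ej: "cmod (e j) \<le> E"
    using Suc.prems(2) j by auto
  obtain L1 where L1: "unit_measure L1" "mass L1 = cmod (e j)" "\<forall>m\<in>{1..<j}. moment m L1 = 0"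
      "moment j L1 = e j" "\<forall>m. cmod (moment m L1) \<le> cmod (e j)"
    using unit_measure_single_moment[OF j(1)] by blast
  define e' where "e' k = e k - moment k L1" for k
  have "cmod (e' k) \<le> 2 * E" if "k \<in> {1..n}" for k
  proof -
    have "cmod (e' k) \<le> cmod (e k) + cmod (moment k L1)"
      unfolding e'_def by (rule norm_triangle_ineq4)
    also have "\<dots> \<le> E + E"
      using Suc.prems(2) that L1(5) ej by (meson add_mono order_trans)
    finally show ?thesis by simp
  qed
  moreover have "e' k = 0" if "k \<in> {1..n - d}" for k
  proof (cases "k < j")
    case True
    then show ?thesis
      using Suc.prems(3) L1(3) that by (simp add: e'_def j_def)
  next
    case False
    then show ?thesis
      using that L1(4) by (simp add: e'_def j_def)
  qed
  ultimately obtain L2 where L2: "unit_measure L2" "mass L2 \<le> (2 ^ d - 1) * (2 * E)"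
      "\<forall>k\<in>{1..n}. moment k L2 = e' k"
    using Suc.IH[of e' "2 * E"] Suc.prems(1) by auto
  have "mass (L1 @ L2) \<le> E + (2 ^ d - 1) * (2 * E)"
    using L1(2) L2(2) ej by simp
  also have "\<dots> = (2 ^ Suc d - 1) * E"
    by (simp add: algebra_simps)
  finally show ?case
    using L1 L2 by (intro exI[of _ "L1 @ L2"]) (auto simp: e'_def)
qed

lemma unit_measure_with_moments:
  assumes "\<forall>k\<in>{1..n}. cmod (e k) \<le> E"
  shows "\<exists>L. unit_measure L \<and> mass L \<le> (2 ^ n - 1) * E \<and> (\<forall>k\<in>{1..n}. moment k L = e k)"
  using unit_measure_clearing_moments[of n n e E] assms by simp

lemma moment_scale_points:
  "moment k (map (\<lambda>(z, a). (of_real r * z, a)) L) = of_real (r ^ k) * moment k L"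
  by (induction L) (auto simp: moment_def power_mult_distrib algebra_simps)

lemma mass_scale_points [simp]: "mass (map (\<lambda>(z, a). (of_real r * z, a)) L) = mass L"
  by (induction L) (auto simp: mass_def)

lemma sum_one_to_pred_eq_sum_lessThan:
  fixes g :: "nat \<Rightarrow> 'a::comm_monoid_add"
  shows "(\<Sum>j=1..m. g (j - 1)) = (\<Sum>i<m. g i)"
  by (induction m) auto

lemma sum_nth_pred_eq_sum_list: "(\<Sum>j=1..length L. f (L ! (j - 1))) = sum_list (map f L)"
  using sum_one_to_pred_eq_sum_lessThan[of "\<lambda>i. f (L ! i)" "length L"]
  by (simp add: sum_list_sum_nth atLeast0LessThan)

lemma indexed_atoms:
  fixes M :: "(complex \<times> real) list"
  obtains mu alpha where "\<forall>j\<in>{1..length M}. (mu j, alpha j) \<in> set M"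
    "(\<Sum>j=1..length M. alpha j) = mass M"
    "\<forall>k. (\<Sum>j=1..length M. complex_of_real (alpha j) * mu j ^ k) = moment k M"
proof
  show "\<forall>j\<in>{1..length M}. (fst (M ! (j - 1)), snd (M ! (j - 1))) \<in> set M"
    by auto
  show "(\<Sum>j=1..length M. snd (M ! (j - 1))) = mass M"
    using sum_nth_pred_eq_sum_list[of snd M] by (simp add: mass_def)
  show "\<forall>k. (\<Sum>j=1..length M. complex_of_real (snd (M ! (j - 1))) * fst (M ! (j - 1)) ^ k)
      = moment k M"
  proof
    fix k
    show "(\<Sum>j=1..length M. complex_of_real (snd (M ! (j - 1))) * fst (M ! (j - 1)) ^ k)
        = moment k M"
      using sum_nth_pred_eq_sum_list[of "\<lambda>(z, a). complex_of_real a * z ^ k" M]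
      by (simp add: moment_def split_def)
  qed
qed

lemma supnorm_ge: "k \<in> {1..n} \<Longrightarrow> cmod (eps k) \<le> supnorm n eps"
  unfolding supnorm_def by (auto intro!: Max_ge)

lemma inverse_power_le_scale:
  fixes rho :: real
  assumes "rho > 0" "k \<le> n"
  shows "inverse (rho ^ k) \<le> (if rho \<le> 1 then inverse (rho ^ n) else 1)"
proof (cases "rho \<le> 1")
  case True
  then have "rho ^ n \<le> rho ^ k"
    using assms by (intro power_decreasing) auto
  then show ?thesis
    using True assms by (simp add: le_imp_inverse_le)
next
  case False
  then show ?thesis
    by (simp add: one_le_power inverse_le_1_iff)
qed

lemma norm_divide_power_le_supnorm:
  fixes rho :: real
  assumes "rho > 0" "k \<in> {1..n}"
  shows "cmod (eps k / of_real (rho ^ k))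
    \<le> (if rho \<le> 1 then inverse (rho ^ n) else 1) * supnorm n eps"
proof -
  have "cmod (eps k / of_real (rho ^ k)) = cmod (eps k) / rho ^ k"
    using assms by (simp add: norm_divide norm_power)
  also have "\<dots> = inverse (rho ^ k) * cmod (eps k)"
    by (simp add: divide_inverse mult.commute)
  also have "\<dots> \<le> (if rho \<le> 1 then inverse (rho ^ n) else 1) * supnorm n eps"
    using assms by (intro mult_mono inverse_power_le_scale supnorm_ge) auto
  finally show ?thesis .
qed

lemma bconst_eq: "bconst rho n = (2 ^ n - 1) * (if rho \<le> 1 then inverse (rho ^ n) else 1)"
  by (simp add: bconst_def power_int_minus)

lemma measure_on_circle_with_moments:
  fixes rho :: real and eps :: "nat \<Rightarrow> complex"
  assumes "rho > 0"
  obtains M where "\<forall>(z, a)\<in>set M. cmod z = rho \<and> a \<ge> 0"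
    "mass M \<le> bconst rho n * supnorm n eps" "\<forall>k\<in>{1..n}. moment k M = eps k"
proof -
  have scaled_bound: "\<forall>k\<in>{1..n}. cmod (eps k / of_real (rho ^ k))
      \<le> (if rho \<le> 1 then inverse (rho ^ n) else 1) * supnorm n eps"
    using norm_divide_power_le_supnorm[OF assms] by blast
  obtain L where L: "unit_measure L" "mass L \<le> bconst rho n * supnorm n eps"
      "\<forall>k\<in>{1..n}. moment k L = eps k / of_real (rho ^ k)"
    using unit_measure_with_moments[OF scaled_bound] unfolding bconst_eq mult.assoc by blast
  define M where "M = map (\<lambda>(z, a). (of_real rho * z, a)) L"
  have "\<forall>(z, a)\<in>set M. cmod z = rho \<and> a \<ge> 0"
    using L(1) assms by (auto simp: M_def unit_measure_def norm_mult)
  moreover have "mass M \<le> bconst rho n * supnorm n eps"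
    using L(2) by (simp add: M_def)
  moreover have "\<forall>k\<in>{1..n}. moment k M = eps k"
    using L(3) assms by (simp add: M_def moment_scale_points)
  ultimately show ?thesis
    using that by blast
qed

theorem lemma4p8:
  fixes rho :: real and n :: nat and eps :: "nat \<Rightarrow> complex"
  assumes "rho > 0"
  shows "\<exists>(s::nat) (mu::nat \<Rightarrow> complex) (alpha::nat \<Rightarrow> real).
           (\<forall>j\<in>{1..s}. cmod (mu j) = rho \<and> alpha j \<ge> 0) \<and>
           (\<Sum>j=1..s. alpha j) \<le> bconst rho n * supnorm n eps \<and>
           (\<forall>k\<in>{1..n}. (\<Sum>j=1..s. complex_of_real (alpha j) * mu j ^ k) = eps k)"
proof -
  obtain M where M: "\<forall>(z, a)\<in>set M. cmod z = rho \<and> a \<ge> 0"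
      "mass M \<le> bconst rho n * supnorm n eps" "\<forall>k\<in>{1..n}. moment k M = eps k"
    using measure_on_circle_with_moments[OF assms] .
  obtain mu alpha where atoms: "\<forall>j\<in>{1..length M}. (mu j, alpha j) \<in> set M"
      "(\<Sum>j=1..length M. alpha j) = mass M"
      "\<forall>k. (\<Sum>j=1..length M. complex_of_real (alpha j) * mu j ^ k) = moment k M"
    by (rule indexed_atoms[of M])
  have "\<forall>j\<in>{1..length M}. cmod (mu j) = rho \<and> alpha j \<ge> 0"
    using M(1) atoms(1) by auto
  then show ?thesis
    using M(2,3) atoms(2,3) by (intro exI[of _ "length M"] exI[of _ mu] exI[of _ alpha]) simp
qed

end
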